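(* Let $S$ be a semigroup, $I, J$ sets and $P$ a $J\times I$ matrix, and let $M$ be either $M(S; I, J; P)$ (entries of $P$ in $S$) or $M^0(S; I, J; P)$ (entries of $P$ in $S \cup \{0\}$), and suppose $M$ is finitely generated. Choose $i \in I$ and $j \in J$ with $P_{ji} \neq 0$ such that for every $j' \in J$ we have $P_{j'i} = 0$ or $S P_{j'i} \subseteq S P_{ji}$, and let $T = \{(i, s, j) : s \in S\} \subseteq M$. Let $\sigma : X^+ \to T$ and $\tau : Y^+ \to M$ be choices of generators such that $X \subseteq Y$ and $\sigma$ is the restriction of $\tau$ to $X^+$. Then $L_\sigma(T) = L_\tau(M) \cap \hat{X}^*$.
   Context: The Rees matrix semigroup with zero $M^0(S; I, J; P)$ (where $0 \notin S$) has elements $(I \times S \times J) \cup \{0\}$, $0$ is a zero, and $(i_1, g_1, j_1)(i_2, g_2, j_2) = (i_1, g_1 P_{j_1 i_2} g_2, j_2)$ if $P_{j_1 i_2} \in S$ and $=0$ if $P_{j_1 i_2} = 0$. If $P$ has no zero entries, $M(S;I,J;P)$ is the subsemigroup $I \times S \times J$. For a semigroup $S$, $S^1$ denotes the monoid obtained by adjoining a new identity $1$ (even if $S$ already has one). A choice of generators for $S$ is a surjective morphism $\sigma : X^+ \to S$ from a free semigroup; it extends uniquely to $\sigma^1 : X^* \to S^1$. Let $\overline{X} = \{\overline{x} : x \in X\}$ be a set of formal inverses, $\hat{X} = X \cup \overline{X}$. The loop automaton of $S$ with respect to $\sigma$ is the directed labelled graph with vertex set $S^1$, having for each $a \in S^1$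 and $x \in X$ an edge from $a$ to $a(x\sigma)$ labelled $x$ and an edge from $a(x\sigma)$ to $a$ labelled $\overline{x}$. The loop problem $L_\sigma(S) \subseteq \hat{X}^*$ is the set of words labelling paths from $1$ to $1$ in this graph (including the empty word). *)

theory Defs
  imports Main
begin

inductive_set sg_generated :: "('c \<Rightarrow> 'c \<Rightarrow> 'c) \<Rightarrow> 'c set \<Rightarrow> 'c set"
  for mult :: "'c \<Rightarrow> 'c \<Rightarrow> 'c" and A :: "'c set" where
  gen_base: "a \<in> A \<Longrightarrow> a \<in> sg_generated mult A"
| gen_mult: "a \<in> sg_generated mult A \<Longrightarrow> b \<in> sg_generated mult A \<Longrightarrow> mult a b \<in> sg_generated mult A"

text \<open>A choice of generators sigma : X^+ -> C (surjective morphism from the free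
  semigroup), determined by its values g on the letters of X.\<close>
definition choice_of_generators :: "'c set \<Rightarrow> ('c \<Rightarrow> 'c \<Rightarrow> 'c) \<Rightarrow> 'x set \<Rightarrow> ('x \<Rightarrow> 'c) \<Rightarrow> bool" where
  "choice_of_generators C mult X g \<longleftrightarrow> g ` X \<subseteq> C \<and> sg_generated mult (g ` X) = C"

definition finitely_generated :: "'c set \<Rightarrow> ('c \<Rightarrow> 'c \<Rightarrow> 'c) \<Rightarrow> bool" where
  "finitely_generated C mult \<longleftrightarrow> (\<exists>F. finite F \<and> F \<subseteq> C \<and> sg_generated mult F = C)"

text \<open>S^1: None is the adjoined identity 1.\<close>
fun mult1 :: "('c \<Rightarrow> 'c \<Rightarrow> 'c) \<Rightarrow> 'c option \<Rightarrow> 'c option \<Rightarrow> 'c option" where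
  "mult1 mult None b = b"
| "mult1 mult (Some a) None = Some a"
| "mult1 mult (Some a) (Some b) = Some (mult a b)"

text \<open>Letters of hat X: Inl x is x, Inr x is the formal inverse bar x.
  loop_path C mult X g a w b: w labels a path from a to b in the loop automaton
  (vertex set S^1 = insert None (Some ` C)).\<close>
inductive loop_path :: "'c set \<Rightarrow> ('c \<Rightarrow> 'c \<Rightarrow> 'c) \<Rightarrow> 'x set \<Rightarrow> ('x \<Rightarrow> 'c)
    \<Rightarrow> 'c option \<Rightarrow> ('x + 'x) list \<Rightarrow> 'c option \<Rightarrow> bool"
  for C mult X g where
  lp_nil: "a \<in> insert None (Some ` C) \<Longrightarrow> loop_path C mult X g a [] a"
| lp_fwd: "a \<in> insert None (Some ` C) \<Longrightarrow> x \<in> X \<Longrightarrow>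
     loop_path C mult X g (mult1 mult a (Some (g x))) w b \<Longrightarrow>
     loop_path C mult X g a (Inl x # w) b"
| lp_bwd: "a \<in> insert None (Some ` C) \<Longrightarrow> x \<in> X \<Longrightarrow>
     loop_path C mult X g a w b \<Longrightarrow>
     loop_path C mult X g (mult1 mult a (Some (g x))) (Inr x # w) b"

definition hat_words :: "'x set \<Rightarrow> ('x + 'x) list set" where
  "hat_words X = {w. set w \<subseteq> Inl ` X \<union> Inr ` X}"

definition loop_problem :: "'c set \<Rightarrow> ('c \<Rightarrow> 'c \<Rightarrow> 'c) \<Rightarrow> 'x set \<Rightarrow> ('x \<Rightarrow> 'c) \<Rightarrow> ('x + 'x) list set" where
  "loop_problem C mult X g = {w \<in> hat_words X. loop_path C mult X g None w None}"

text \<open>Rees matrix semigroup with zero over S (a type of class semigroup_mult),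
  index types 'i, 'j, sandwich matrix P (None = 0). The element None is the zero.\<close>
fun rees_mult :: "('j \<Rightarrow> 'i \<Rightarrow> 'a::semigroup_mult option)
    \<Rightarrow> ('i \<times> 'a \<times> 'j) option \<Rightarrow> ('i \<times> 'a \<times> 'j) option \<Rightarrow> ('i \<times> 'a \<times> 'j) option" where
  "rees_mult P (Some (i1, g1, j1)) (Some (i2, g2, j2)) =
     (case P j1 i2 of None \<Rightarrow> None | Some p \<Rightarrow> Some (i1, g1 * p * g2, j2))"
| "rees_mult P _ _ = None"

end

theory Submission
  imports Defs
begin

text \<open>A loop of the loop automaton of \<open>T\<close> is a loop of the automaton of \<open>M\<close>, since
  \<open>T \<subseteq> M\<close> and \<open>X \<subseteq> Y\<close>. Conversely, along a path over \<open>X\<close> ending in \<open>1\<close> the automaton of \<open>M\<close>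
  only visits \<open>1\<close> and elements \<open>(i, u, j')\<close> with \<open>P\<^sub>j\<^sub>'\<^sub>i \<noteq> 0\<close>, because the letters act
  as right multiplication by elements \<open>(i, t, j)\<close>. Since \<open>S P\<^sub>j\<^sub>'\<^sub>i \<subseteq> S P\<^sub>j\<^sub>i\<close>, such an element
  can be replaced by some \<open>(i, s, j)\<close> with \<open>s P\<^sub>j\<^sub>i = u P\<^sub>j\<^sub>'\<^sub>i\<close>, which has the same right
  multiples by elements of \<open>T\<close>. This retraction commutes with the edges and maps the loop
  onto a loop of the automaton of \<open>T\<close>.\<close>

lemma hat_words_mono: "X \<subseteq> Y \<Longrightarrow> hat_words X \<subseteq> hat_words Y"
  unfolding hat_words_def by blast

lemma loop_path_mono:
  assumes "loop_path C mult X g a w b" "C \<subseteq> C'" "X \<subseteq> Y"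
  shows "loop_path C' mult Y g a w b"
  using assms
  by (induction rule: loop_path.induct) (auto intro: loop_path.intros)

lemma loop_path_simulation:
  assumes path: "loop_path C mult Y g a w b"
    and closed: "\<And>a x. x \<in> X \<Longrightarrow> mult1 mult a (Some (g x)) \<in> G \<longleftrightarrow> a \<in> G"
    and maps_to: "\<And>a. a \<in> G \<Longrightarrow> \<phi> a \<in> insert None (Some ` C')"
    and hom: "\<And>a x. a \<in> G \<Longrightarrow> x \<in> X \<Longrightarrow>
                \<phi> (mult1 mult a (Some (g x))) = mult1 mult (\<phi> a) (Some (g x))"
  shows "a \<in> G \<Longrightarrow> w \<in> hat_words X \<Longrightarrow> loop_path C' mult X g (\<phi> a) w (\<phi> b)"
  using path
proof (induction rule: loop_path.induct)
  case (lp_nil a)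
  then show ?case by (intro loop_path.lp_nil maps_to)
next
  case (lp_fwd a x w b)
  then have "x \<in> X" "w \<in> hat_words X" by (auto simp: hat_words_def)
  with lp_fwd show ?case
    by (metis closed hom maps_to loop_path.lp_fwd)
next
  case (lp_bwd a x w b)
  then have "x \<in> X" "w \<in> hat_words X" by (auto simp: hat_words_def)
  with lp_bwd show ?case
    by (metis closed hom maps_to loop_path.lp_bwd)
qed

definition rees_row_vertices :: "('j \<Rightarrow> 'i \<Rightarrow> 'a::semigroup_mult option) \<Rightarrow> 'i
    \<Rightarrow> ('i \<times> 'a \<times> 'j) option option set" where
  "rees_row_vertices P i = insert None {Some (Some (i, u, j')) | u j'. P j' i \<noteq> None}"

text \<open>Column \<open>j\<close> is fixed explicitly: \<open>S\<close> need not be cancellative, so the choice of \<open>s\<close>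
  with \<open>s P\<^sub>j\<^sub>i = u P\<^sub>j\<^sub>i\<close> might not return \<open>u\<close>.\<close>

definition rees_column_retract :: "('j \<Rightarrow> 'i \<Rightarrow> 'a::semigroup_mult option) \<Rightarrow> 'i \<Rightarrow> 'j \<Rightarrow> 'a
    \<Rightarrow> ('i \<times> 'a \<times> 'j) option option \<Rightarrow> ('i \<times> 'a \<times> 'j) option option" where
  "rees_column_retract P i j p a = (case a of
      Some (Some (i', u, j')) \<Rightarrow>
        if j' = j then a else Some (Some (i, SOME s. s * p = u * the (P j' i), j))
    | _ \<Rightarrow> a)"

lemma rees_row_vertices_mult_iff:
  assumes "P j i \<noteq> None"
  shows "mult1 (rees_mult P) a (Some (Some (i, t, j))) \<in> rees_row_vertices P i
           \<longleftrightarrow> a \<in> rees_row_vertices P i"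
  using assms
  by (cases a; cases "the a") (auto simp: rees_row_vertices_def split: option.splits)

lemma rees_column_retract_mem:
  "a \<in> rees_row_vertices P i
     \<Longrightarrow> rees_column_retract P i j p a \<in> insert None (Some ` {Some (i, s, j) | s. True})"
  by (auto simp: rees_row_vertices_def rees_column_retract_def split: if_splits)

lemma rees_column_retract_mult:
  fixes P :: "'j \<Rightarrow> 'i \<Rightarrow> 'a::semigroup_mult option"
  assumes Pji: "P j i = Some p"
    and divisible: "\<And>j' q u. P j' i = Some q \<Longrightarrow> \<exists>s. s * p = u * q"
    and a: "a \<in> rees_row_vertices P i"
  shows "rees_column_retract P i j p (mult1 (rees_mult P) a (Some (Some (i, t, j))))
       = mult1 (rees_mult P) (rees_column_retract P i j p a) (Some (Some (i, t, j)))"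
proof (cases "a = None")
  case True
  then show ?thesis by (simp add: rees_column_retract_def)
next
  case False
  then obtain u j' q where a: "a = Some (Some (i, u, j'))" and q: "P j' i = Some q"
    using a by (auto simp: rees_row_vertices_def)
  show ?thesis
  proof (cases "j' = j")
    case True
    with a q show ?thesis by (simp add: rees_column_retract_def)
  next
    case False
    have "(SOME s. s * p = u * q) * p = u * q"
      using divisible[OF q] by (rule someI_ex)
    then have "(SOME s. s * p = u * q) * p * t = u * q * t" by simp
    with a q False Pji show ?thesis
      by (simp add: rees_column_retract_def mult.assoc)
  qed
qed

lemma rees_loop_path_retract:
  fixes P :: "'j \<Rightarrow> 'i \<Rightarrow> 'a::semigroup_mult option"
  assumes Pji: "P j i = Some p"
    and divisible: "\<And>j' q u. P j' i = Some q \<Longrightarrow> \<exists>s. s * p = u * q"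
    and \<tau>X: "\<tau> ` X \<subseteq> {Some (i, s, j) | s. True}"
    and path: "loop_path C (rees_mult P) Y \<tau> None w None"
    and w: "w \<in> hat_words X"
  shows "loop_path {Some (i, s, j) | s. True} (rees_mult P) X \<tau> None w None"
proof -
  let ?\<phi> = "rees_column_retract P i j p"
  have \<tau>x: "\<exists>t. \<tau> x = Some (i, t, j)" if "x \<in> X" for x
    using \<tau>X that by blast
  have "loop_path {Some (i, s, j) | s. True} (rees_mult P) X \<tau> (?\<phi> None) w (?\<phi> None)"
    using path
  proof (rule loop_path_simulation[where G = "rees_row_vertices P i"])
    show "mult1 (rees_mult P) a (Some (\<tau> x)) \<in> rees_row_vertices P i
            \<longleftrightarrow> a \<in> rees_row_vertices P i" if "x \<in> X" for a x
      using \<tau>x[OF that] rees_row_vertices_mult_iff Pji by force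
    show "?\<phi> (mult1 (rees_mult P) a (Some (\<tau> x))) = mult1 (rees_mult P) (?\<phi> a) (Some (\<tau> x))"
      if "a \<in> rees_row_vertices P i" "x \<in> X" for a x
      using \<tau>x[OF that(2)] rees_column_retract_mult[OF Pji divisible that(1)] by force
    show "?\<phi> a \<in> insert None (Some ` {Some (i, s, j) | s. True})"
      if "a \<in> rees_row_vertices P i" for a
      using that by (rule rees_column_retract_mem)
  qed (simp_all add: w rees_row_vertices_def)
  then show ?thesis by (simp add: rees_column_retract_def)
qed

theorem theorem5p2:
  fixes P :: "'j \<Rightarrow> 'i \<Rightarrow> 'a::semigroup_mult option"
    and Mc :: "('i \<times> 'a \<times> 'j) option set"
    and i :: 'i and j :: 'j and p :: 'a
    and X Y :: "'x set" and \<tau> :: "'x \<Rightarrow> ('i \<times> 'a \<times> 'j) option"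
  assumes M_cases: "(Mc = range Some \<and> (\<forall>j' i'. P j' i' \<noteq> None)) \<or> Mc = UNIV"
    and fg: "finitely_generated Mc (rees_mult P)"
    and Pji: "P j i = Some p"
    and Pcond: "\<forall>j'. P j' i = None \<or>
                  (\<exists>q. P j' i = Some q \<and> {s * q | s. True} \<subseteq> {s * p | s. True})"
    and XY: "X \<subseteq> Y"
    and sigma: "choice_of_generators {Some (i, s, j) | s. True} (rees_mult P) X \<tau>"
    and tau: "choice_of_generators Mc (rees_mult P) Y \<tau>"
  shows "loop_problem {Some (i, s, j) | s. True} (rees_mult P) X \<tau>
           = loop_problem Mc (rees_mult P) Y \<tau> \<inter> hat_words X"
proof
  have "{Some (i, s, j) | s. True} \<subseteq> Mc" using M_cases by auto
  with loop_path_mono XY hat_words_mono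
  show "loop_problem {Some (i, s, j) | s. True} (rees_mult P) X \<tau>
          \<subseteq> loop_problem Mc (rees_mult P) Y \<tau> \<inter> hat_words X"
    by (fastforce simp: loop_problem_def)
next
  have divisible: "\<exists>s. s * p = u * q" if "P j' i = Some q" for j' q u
  proof -
    from Pcond that have "{s * q | s. True} \<subseteq> {s * p | s. True}"
      by (metis option.distinct(1) option.inject)
    then have "u * q \<in> {s * p | s. True}" by blast
    then show ?thesis by auto
  qed
  moreover have "\<tau> ` X \<subseteq> {Some (i, s, j) | s. True}"
    using sigma by (simp add: choice_of_generators_def)
  ultimately have "loop_path {Some (i, s, j) | s. True} (rees_mult P) X \<tau> None w None"
    if "loop_path Mc (rees_mult P) Y \<tau> None w None" "w \<in> hat_words X" for w
    using rees_loop_path_retract[of P j i p] Pji that by blast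
  then show "loop_problem Mc (rees_mult P) Y \<tau> \<inter> hat_words X
               \<subseteq> loop_problem {Some (i, s, j) | s. True} (rees_mult P) X \<tau>"
    by (auto simp: loop_problem_def)
qed

end
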